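(* Let $K=\mathbb{C}(x,y)$, let $k\in K^*$ and let $\ell$ be an element of an extension field with $\ell^n=k$ and $[K(\ell):K]=n$; put $L=K(\ell)$. Write $k=q_1^{e_1}\cdots q_r^{e_r}$ with pairwise relatively prime irreducible polynomials $q_i\in\mathbb{C}[x,y]$ and nonzero integers $e_i$ (up to a nonzero constant factor). If no $q_i$ lies in $\mathbb{C}[x]$, then $\mathbb{C}(x)$ is algebraically closed in $L$, i.e. every element of $L$ that is algebraic over $\mathbb{C}(x)$ lies in $\mathbb{C}(x)$. *)

theory Defs
  imports Complex_Main "HOL-Computational_Algebra.Polynomial" "HOL-Computational_Algebra.Fraction_Field"
begin

text \<open>C[x,y] is modelled as complex poly poly: the inner variable is x, the outer one is y.
  So C[x] inside C[x,y] consists of the constant (outer) polynomials [:a:].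
  K = C(x,y) is the fraction field.\<close>

type_synonym Cxy = "complex poly poly"
type_synonym K = "complex poly poly fract"

definition to_K :: "Cxy \<Rightarrow> K" where
  "to_K p = Fract p 1"

definition Cx_poly :: "Cxy set" where
  "Cx_poly = {[:a:] | a. True}"

definition Cx_field :: "K set" where
  "Cx_field = {to_K [:a:] / to_K [:b:] | a b. b \<noteq> 0}"

definition is_field_hom :: "('a::field \<Rightarrow> 'b::field) \<Rightarrow> bool" where
  "is_field_hom \<phi> \<longleftrightarrow> (\<forall>a b. \<phi> (a + b) = \<phi> a + \<phi> b) \<and> (\<forall>a b. \<phi> (a * b) = \<phi> a * \<phi> b) \<and> \<phi> 1 = 1"

inductive_set gen_field :: "('a::field \<Rightarrow> 'b::field) \<Rightarrow> 'b \<Rightarrow> 'b set" for \<phi> l where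
  base: "\<phi> c \<in> gen_field \<phi> l"
| gen: "l \<in> gen_field \<phi> l"
| add: "x \<in> gen_field \<phi> l \<Longrightarrow> y \<in> gen_field \<phi> l \<Longrightarrow> x + y \<in> gen_field \<phi> l"
| neg: "x \<in> gen_field \<phi> l \<Longrightarrow> - x \<in> gen_field \<phi> l"
| mult: "x \<in> gen_field \<phi> l \<Longrightarrow> y \<in> gen_field \<phi> l \<Longrightarrow> x * y \<in> gen_field \<phi> l"
| inv: "x \<in> gen_field \<phi> l \<Longrightarrow> inverse x \<in> gen_field \<phi> l"

definition ext_degree_eq :: "('a::field \<Rightarrow> 'b::field) \<Rightarrow> 'b \<Rightarrow> nat \<Rightarrow> bool" where
  "ext_degree_eq \<phi> l n \<longleftrightarrow>
     (\<exists>p. p \<noteq> 0 \<and> degree p = n \<and> poly (map_poly \<phi> p) l = 0) \<and>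
     (\<forall>p. p \<noteq> 0 \<and> poly (map_poly \<phi> p) l = 0 \<longrightarrow> n \<le> degree p)"

definition algebraic_over :: "('a::field \<Rightarrow> 'b::field) \<Rightarrow> 'a set \<Rightarrow> 'b \<Rightarrow> bool" where
  "algebraic_over \<phi> F z \<longleftrightarrow> (\<exists>p. p \<noteq> 0 \<and> (\<forall>i. coeff p i \<in> F) \<and> poly (map_poly \<phi> p) z = 0)"

end

theory Submission
  imports Defs "HOL-Computational_Algebra.Polynomial_Factorial" "HOL-Computational_Algebra.Field_as_Ring"
    "HOL-Computational_Algebra.Normalized_Fraction"
begin

text \<open>
  Let \<open>D\<close> be the derivation \<open>\<partial>/\<partial>y\<close> of \<open>K = \<complex>(x,y)\<close>; its field of constants is \<open>\<complex>(x)\<close>.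
  Since \<open>l ^ n = k\<close>, \<open>D\<close> extends to \<open>L = K(l)\<close> by \<open>D l = (D k / (n * k)) * l\<close>, and the
  extension kills every element of \<open>L\<close> that is algebraic over \<open>\<complex>(x)\<close> (apply it to a separable
  annihilating polynomial with constant coefficients). For \<open>z = (\<Sum>i<n. a i * l ^ i)\<close> this
  forces \<open>D (a i) = - (i / n) * (D k / k) * a i\<close>, so every \<open>a i ^ n * k ^ i\<close> lies in \<open>\<complex>(x)\<close>.
  If \<open>a i \<noteq> 0\<close> for some \<open>0 < i < n\<close>, comparing \<open>q j\<close>-adic valuations (no \<open>q j\<close> divides a
  nonzero element of \<open>\<complex>[x]\<close>) yields \<open>n dvd i * e j\<close> for all \<open>j\<close>. Then \<open>k\<close> is a \<open>p\<close>-th power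
  in \<open>K\<close> for \<open>p = n div gcd n i > 1\<close>, so \<open>X ^ n - k\<close> factors over \<open>K\<close>, contradicting
  \<open>[L:K] = n\<close>. Hence \<open>z = a 0 \<in> \<complex>(x)\<close>.
\<close>

section \<open>Derivations\<close>

locale derivation =
  fixes D :: "'a::comm_ring_1 \<Rightarrow> 'a"
  assumes add [simp]: "D (a + b) = D a + D b"
    and mult [simp]: "D (a * b) = D a * b + a * D b"
begin

lemma zero [simp]: "D 0 = 0"
  using add[of 0 0] by simp

lemma one [simp]: "D 1 = 0"
  using mult[of 1 1] by simp

lemma uminus [simp]: "D (- a) = - D a"
  using add[of a "- a"] by (simp add: add_eq_0_iff)

lemma diff [simp]: "D (a - b) = D a - D b"
  using add[of a "- b"] by simp

lemma of_nat [simp]: "D (of_nat m) = 0"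
  by (induct m) simp_all

lemma sum: "D (sum f A) = (\<Sum>x\<in>A. D (f x))"
  by (induct A rule: infinite_finite_induct) simp_all

lemma power: "D (a ^ m) = of_nat m * a ^ (m - 1) * D a"
  by (induct m) (auto simp: algebra_simps power_eq_if)

end

lemma degree_monom_minus_const:
  fixes c :: "'a::comm_ring_1"
  shows "0 < m \<Longrightarrow> degree (monom 1 m - [:c:]) = m"
  using degree_add_eq_left[of "- [:c:]" "monom 1 m"] by (simp add: degree_monom_eq diff_conv_add_uminus)

section \<open>Simple extensions\<close>

locale simple_extension =
  fixes \<phi> :: "'K::field_gcd \<Rightarrow> 'L::field" and l :: 'L and n :: nat
  assumes hom: "is_field_hom \<phi>" and ext_degree: "ext_degree_eq \<phi> l n"
begin

lemma hom_add: "\<phi> (a + b) = \<phi> a + \<phi> b" and hom_mult: "\<phi> (a * b) = \<phi> a * \<phi> b"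
  and hom_1: "\<phi> 1 = 1"
  using hom by (auto simp: is_field_hom_def)

lemma hom_0: "\<phi> 0 = 0"
  using hom_add[of 0 0] by (metis add.right_neutral add_left_cancel)

lemma hom_eq_0_iff: "\<phi> a = 0 \<longleftrightarrow> a = 0"
proof
  assume "\<phi> a = 0"
  then have "\<phi> (a * inverse a) = 0" by (simp add: hom_mult)
  then show "a = 0" by (cases "a = 0") (simp_all add: hom_1)
qed (simp add: hom_0)

definition eval_l :: "'K poly \<Rightarrow> 'L" where
  "eval_l P = poly (map_poly \<phi> P) l"

lemma eval_l_0 [simp]: "eval_l 0 = 0"
  by (simp add: eval_l_def)

lemma eval_l_pCons [simp]: "eval_l (pCons a P) = \<phi> a + l * eval_l P"
  by (simp add: eval_l_def map_poly_pCons hom_0)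

lemma eval_l_const: "eval_l [:a:] = \<phi> a"
  by simp

lemma eval_l_add [simp]: "eval_l (P + Q) = eval_l P + eval_l Q"
proof (induct P arbitrary: Q)
  case (pCons a P)
  then show ?case by (cases Q) (simp add: hom_add algebra_simps)
qed simp

lemma eval_l_smult [simp]: "eval_l (smult a P) = \<phi> a * eval_l P"
  by (induct P) (simp_all add: hom_mult algebra_simps)

lemma eval_l_mult [simp]: "eval_l (P * Q) = eval_l P * eval_l Q"
  by (induct P) (simp_all add: hom_0 algebra_simps)

lemma eval_l_diff [simp]: "eval_l (P - Q) = eval_l P - eval_l Q"
  using eval_l_add[of "P - Q" Q] by (simp add: algebra_simps)

lemma eval_l_uminus [simp]: "eval_l (- P) = - eval_l P"
  using eval_l_diff[of 0 P] by simp

lemma eval_l_monom [simp]: "eval_l (monom a m) = \<phi> a * l ^ m"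
  by (simp add: eval_l_def map_poly_monom hom_0 poly_monom)

lemma eval_l_pcompose: "eval_l (pcompose g P) = poly (map_poly \<phi> g) (eval_l P)"
  by (induct g) (simp_all add: pcompose_pCons map_poly_pCons hom_0)

lemma ext_degree_le: "P \<noteq> 0 \<Longrightarrow> eval_l P = 0 \<Longrightarrow> n \<le> degree P"
  using ext_degree by (auto simp: ext_degree_eq_def eval_l_def)

lemma ext_degree_pos: "0 < n"
proof (rule ccontr)
  assume "\<not> 0 < n"
  obtain P where "P \<noteq> 0" "degree P = n" "eval_l P = 0"
    using ext_degree by (auto simp: ext_degree_eq_def eval_l_def)
  then show False
    using \<open>\<not> 0 < n\<close> by (metis degree_eq_zeroE eval_l_const hom_eq_0_iff neq0_conv pCons_0_0)
qed

lemma eval_l_mult_eq_0_degree: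
  assumes "eval_l (A * B) = 0" "A \<noteq> 0" "B \<noteq> 0"
  shows "n \<le> degree A \<or> n \<le> degree B"
  using assms ext_degree_le[of A] ext_degree_le[of B] by auto

lemma eval_l_mod: "eval_l A = 0 \<Longrightarrow> eval_l (P mod A) = eval_l P"
proof -
  assume "eval_l A = 0"
  have "eval_l P = eval_l (P div A * A + P mod A)" by (simp only: div_mult_mod_eq)
  then show ?thesis
    using \<open>eval_l A = 0\<close> by (simp only: eval_l_add eval_l_mult mult_zero_right add_0_left)
qed

lemma ex_eval_l_degree_less: "\<exists>Q. degree Q < n \<and> eval_l Q = eval_l P"
proof -
  obtain A where A: "degree A = n" "eval_l A = 0"
    using ext_degree by (auto simp: ext_degree_eq_def eval_l_def)
  then have "A \<noteq> 0" using ext_degree_pos by auto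
  have "degree (P mod A) < n"
    using degree_mod_less'[OF \<open>A \<noteq> 0\<close>] A ext_degree_pos by (cases "P mod A = 0") auto
  then show ?thesis using eval_l_mod[OF \<open>eval_l A = 0\<close>] by blast
qed

lemma dvd_if_eval_l_eq_0:
  assumes A: "degree A = n" "eval_l A = 0" and P: "eval_l P = 0"
  shows "A dvd P"
proof -
  have "A \<noteq> 0" using A ext_degree_pos by auto
  have "P mod A \<noteq> 0 \<Longrightarrow> degree (P mod A) < n"
    using degree_mod_less'[OF \<open>A \<noteq> 0\<close>] A by simp
  then have "P mod A = 0" using ext_degree_le eval_l_mod[of A P] A P by force
  then show ?thesis by (rule mod_0_imp_dvd)
qed

lemma ex_eval_l_inverse: "\<exists>Q. eval_l Q = inverse (eval_l P)"
proof (cases "eval_l P = 0")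
  case True
  then show ?thesis by (intro exI[of _ 0]) simp
next
  case False
  obtain A where A: "degree A = n" "eval_l A = 0"
    using ext_degree by (auto simp: ext_degree_eq_def eval_l_def)
  obtain P' where P': "degree P' < n" "eval_l P' = eval_l P"
    using ex_eval_l_degree_less by blast
  have "P' \<noteq> 0" "A \<noteq> 0" using False P' A ext_degree_pos by auto
  obtain H where H: "A = gcd P' A * H" using gcd_dvd2[of P' A] by (rule dvdE)
  with \<open>A \<noteq> 0\<close> have "gcd P' A \<noteq> 0" "H \<noteq> 0" by auto
  have "degree (gcd P' A) < n"
    using dvd_imp_degree_le[OF gcd_dvd1[of P' A] \<open>P' \<noteq> 0\<close>] P' by simp
  with eval_l_mult_eq_0_degree[of "gcd P' A" H] have "n \<le> degree H"
    using H A \<open>gcd P' A \<noteq> 0\<close> \<open>H \<noteq> 0\<close> by auto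
  then have "degree (gcd P' A) = 0"
    using H A degree_mult_eq[OF \<open>gcd P' A \<noteq> 0\<close> \<open>H \<noteq> 0\<close>] by simp
  then obtain g where g: "gcd P' A = [:g:]" by (rule degree_eq_zeroE)
  with \<open>gcd P' A \<noteq> 0\<close> have "g \<noteq> 0" by simp
  obtain U V where "U * P' + V * A = [:g:]"
    using bezout_coefficients_fst_snd[of P' A] g by metis
  then have "eval_l (U * P' + V * A) = \<phi> g" by simp
  then have "eval_l U * eval_l P = \<phi> g"
    using A P' by simp
  then have "eval_l P * eval_l (smult (inverse g) U) = 1"
    using \<open>g \<noteq> 0\<close> by (simp add: hom_mult[symmetric] hom_1 ac_simps)
  then show ?thesis by (metis inverse_unique)
qed

lemma gen_field_eval_l:
  assumes "z \<in> gen_field \<phi> l"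
  shows "\<exists>P. degree P < n \<and> z = eval_l P"
proof -
  from assms have "\<exists>P. z = eval_l P"
  proof induct
    case (base c)
    show ?case by (metis eval_l_const)
  next
    case gen
    have "eval_l [:0, 1:] = l" by (simp add: hom_0 hom_1)
    then show ?case by metis
  next
    case (add x y)
    then show ?case by (metis eval_l_add)
  next
    case (neg x)
    then show ?case by (metis eval_l_uminus)
  next
    case (mult x y)
    then show ?case by (metis eval_l_mult)
  next
    case (inv x)
    then show ?case by (metis ex_eval_l_inverse)
  qed
  then show ?thesis using ex_eval_l_degree_less by metis
qed

end

locale radical_extension = simple_extension \<phi> l n
  for \<phi> :: "'K::field_gcd \<Rightarrow> 'L::field" and l n +
  fixes k :: 'K
  assumes radicand_nz: "k \<noteq> 0" and root: "l ^ n = \<phi> k"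
begin

definition radical_poly :: "'K poly" where
  "radical_poly = monom 1 n - [:k:]"

lemma degree_radical_poly: "degree radical_poly = n"
  using ext_degree_pos by (simp add: radical_poly_def degree_monom_minus_const)

lemma eval_l_radical_poly: "eval_l radical_poly = 0"
  by (simp add: radical_poly_def hom_1 root)

lemma radical_poly_dvd: "eval_l P = 0 \<Longrightarrow> radical_poly dvd P"
  using dvd_if_eval_l_eq_0 degree_radical_poly eval_l_radical_poly by blast

text \<open>If \<open>k = g ^ p\<close> with \<open>n = m p\<close>, then \<open>X ^ m - g\<close> is a proper factor of \<open>X ^ n - k\<close>.\<close>
lemma radicand_not_power:
  assumes "1 < p" "p dvd n"
  shows "k \<noteq> g ^ p"
proof
  assume k: "k = g ^ p"
  obtain m where m: "n = m * p" using assms by (auto elim!: dvdE simp: mult.commute)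
  have "0 < m" "m < n" using m assms ext_degree_pos by (auto intro: Nat.gr0I)
  define A where "A = monom 1 m - [:g:]"
  define B where "B = (\<Sum>i<p. [:g:] ^ (p - Suc i) * monom 1 m ^ i)"
  have "radical_poly = monom 1 m ^ p - [:g:] ^ p"
    unfolding radical_poly_def by (simp add: m k monom_power poly_const_pow)
  also have "\<dots> = A * B"
    unfolding A_def B_def by (rule power_diff_sumr2)
  finally have AB: "radical_poly = A * B" .
  have "degree A = m"
    using \<open>0 < m\<close> by (simp add: A_def degree_monom_minus_const)
  moreover have "A \<noteq> 0" "B \<noteq> 0"
    using AB degree_radical_poly ext_degree_pos by auto
  ultimately have "degree B = n - m"
    using AB degree_radical_poly degree_mult_eq[of A B] by simp
  then show False
    using eval_l_mult_eq_0_degree[of A B] AB eval_l_radical_poly \<open>A \<noteq> 0\<close> \<open>B \<noteq> 0\<close>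
      \<open>degree A = m\<close> \<open>0 < m\<close> \<open>m < n\<close> by auto
qed

end

section \<open>Extending a derivation to a radical extension\<close>

locale radical_extension_derivation = radical_extension \<phi> l n k + D: derivation D
  for \<phi> :: "'K::{field_gcd, field_char_0} \<Rightarrow> 'L::field" and l n k and D :: "'K \<Rightarrow> 'K"
begin

definition log_deriv :: 'K where
  "log_deriv = D k / (of_nat n * k)"

text \<open>The extension of \<open>D\<close> to \<open>K(l)\<close>, acting on polynomial representatives: \<open>l ^ n = k\<close> forces
  \<open>D l = log_deriv * l\<close>. It preserves multiples of \<open>X ^ n - k\<close>, so it is well defined on \<open>K(l)\<close>.\<close>
definition ext_deriv :: "'K poly \<Rightarrow> 'K poly" where
  "ext_deriv P = map_poly D P + smult log_deriv (pCons 0 (pderiv P))"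

lemma coeff_ext_deriv: "coeff (ext_deriv P) i = D (coeff P i) + log_deriv * (of_nat i * coeff P i)"
  by (cases i) (simp_all add: ext_deriv_def coeff_map_poly coeff_pderiv)

lemma ext_deriv_add: "ext_deriv (P + Q) = ext_deriv P + ext_deriv Q"
  by (rule poly_eqI) (simp add: coeff_ext_deriv algebra_simps)

lemma map_poly_D_mult: "map_poly D (P * Q) = map_poly D P * Q + P * map_poly D Q"
  by (rule poly_eqI) (simp add: coeff_map_poly coeff_mult D.sum sum.distrib)

lemma ext_deriv_mult: "ext_deriv (P * Q) = ext_deriv P * Q + P * ext_deriv Q"
  by (simp add: ext_deriv_def map_poly_D_mult pderiv_mult algebra_simps smult_add_right)

lemma ext_deriv_const: "D a = 0 \<Longrightarrow> ext_deriv [:a:] = 0"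
  by (rule poly_eqI) (simp add: coeff_ext_deriv coeff_pCons split: nat.split)

lemma degree_ext_deriv_le: "degree (ext_deriv P) \<le> degree P"
  by (rule degree_le) (simp add: coeff_ext_deriv coeff_eq_0)

lemma ext_deriv_radical_poly: "ext_deriv radical_poly = smult (D k / k) radical_poly"
proof (rule poly_eqI)
  fix i
  have "of_nat n \<noteq> (0 :: 'K)" using ext_degree_pos by simp
  then show "coeff (ext_deriv radical_poly) i = coeff (smult (D k / k) radical_poly) i"
    using radicand_nz ext_degree_pos
    by (cases i) (auto simp: coeff_ext_deriv radical_poly_def coeff_monom log_deriv_def field_simps)
qed

lemma radical_poly_dvd_ext_deriv:
  assumes "radical_poly dvd P"
  shows "radical_poly dvd ext_deriv P"
proof -
  obtain R where "P = radical_poly * R" using assms by (rule dvdE)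
  then have "ext_deriv P = radical_poly * (smult (D k / k) R + ext_deriv R)"
    by (simp add: ext_deriv_mult ext_deriv_radical_poly algebra_simps)
  then show ?thesis by simp
qed

lemma ext_deriv_pcompose:
  "(\<And>i. D (coeff g i) = 0) \<Longrightarrow> ext_deriv (pcompose g P) = pcompose (pderiv g) P * ext_deriv P"
proof (induct g)
  case (pCons a g)
  have "D a = 0" "\<And>i. D (coeff g i) = 0"
    using pCons.prems[of 0] pCons.prems[of "Suc _"] by simp_all
  with pCons.hyps show ?case
    by (simp add: pcompose_pCons pderiv_pCons pcompose_add ext_deriv_add ext_deriv_mult
        ext_deriv_const algebra_simps)
qed (simp add: ext_deriv_def)

text \<open>An annihilating polynomial of least degree with constant coefficients: its derivative
  again has constant coefficients and smaller degree, so it cannot vanish at \<open>z\<close>.\<close>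
lemma algebraic_over_constants_separable:
  assumes "algebraic_over \<phi> {c. D c = 0} z"
  obtains g where "\<And>i. D (coeff g i) = 0" "poly (map_poly \<phi> g) z = 0"
    "poly (map_poly \<phi> (pderiv g)) z \<noteq> 0"
proof -
  define S where "S = {g. g \<noteq> 0 \<and> (\<forall>i. D (coeff g i) = 0) \<and> poly (map_poly \<phi> g) z = 0}"
  obtain p where "p \<in> S" using assms by (auto simp: algebraic_over_def S_def)
  then obtain g where g: "g \<in> S" and g_min: "\<And>h. h \<in> S \<Longrightarrow> degree g \<le> degree h"
    using ex_has_least_nat[of "\<lambda>g. g \<in> S" p degree] by blast
  then have g_const: "\<And>i. D (coeff g i) = 0" and g_root: "poly (map_poly \<phi> g) z = 0"
    by (auto simp: S_def)
  have "degree g \<noteq> 0"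
  proof
    assume "degree g = 0"
    then obtain a where "g = [:a:]" by (rule degree_eq_zeroE)
    with g have "a \<noteq> 0" "\<phi> a = 0" by (auto simp: S_def map_poly_pCons hom_0)
    then show False by (simp add: hom_eq_0_iff)
  qed
  then have "pderiv g \<noteq> 0" "degree (pderiv g) < degree g"
    by (simp_all add: pderiv_eq_0_iff degree_pderiv)
  moreover have "\<And>i. D (coeff (pderiv g) i) = 0"
    using g_const by (simp add: coeff_pderiv del: of_nat_Suc)
  ultimately have "pderiv g \<notin> S" using g_min leD by blast
  then have "poly (map_poly \<phi> (pderiv g)) z \<noteq> 0"
    using \<open>pderiv g \<noteq> 0\<close> \<open>\<And>i. D (coeff (pderiv g) i) = 0\<close> by (simp add: S_def)
  then show ?thesis by (rule that[OF g_const g_root])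
qed

lemma ext_deriv_eq_0_if_algebraic:
  assumes P: "degree P < n" and alg: "algebraic_over \<phi> {c. D c = 0} (eval_l P)"
  shows "ext_deriv P = 0"
proof -
  obtain g where g_const: "\<And>i. D (coeff g i) = 0" and g_root: "poly (map_poly \<phi> g) (eval_l P) = 0"
    and g_sep: "poly (map_poly \<phi> (pderiv g)) (eval_l P) \<noteq> 0"
    using algebraic_over_constants_separable[OF alg] by blast
  have "radical_poly dvd pcompose g P"
    using g_root by (intro radical_poly_dvd) (simp add: eval_l_pcompose)
  then have "radical_poly dvd pcompose (pderiv g) P * ext_deriv P"
    using radical_poly_dvd_ext_deriv ext_deriv_pcompose[OF g_const] by metis
  then have "eval_l (pcompose (pderiv g) P) * eval_l (ext_deriv P) = 0"
    using eval_l_radical_poly by (elim dvdE) (metis eval_l_mult mult_zero_left)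
  then have "eval_l (ext_deriv P) = 0"
    using g_sep by (simp add: eval_l_pcompose)
  then show ?thesis
    using ext_degree_le degree_ext_deriv_le[of P] P by fastforce
qed

lemma D_coeff_if_ext_deriv_eq_0:
  assumes "ext_deriv P = 0"
  shows "D (coeff P i) = - (log_deriv * (of_nat i * coeff P i))"
  using coeff_ext_deriv[of P i] assms by (simp add: eq_neg_iff_add_eq_0)

text \<open>If \<open>D a = - i (D l / l) a\<close>, then \<open>a ^ n * k ^ i\<close> behaves like \<open>(a * l ^ i) ^ n\<close>, a constant.\<close>
lemma D_power_radicand_eq_0:
  assumes "D a = - (log_deriv * (of_nat i * a))"
  shows "D (a ^ n * k ^ i) = 0"
proof -
  have "of_nat n \<noteq> (0 :: 'K)" using ext_degree_pos by simp
  then have rel: "k * (D a * of_nat n) = - (a * (D k * of_nat i))"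
    using assms radicand_nz by (simp add: log_deriv_def field_simps)
  have "of_nat n * a ^ (n - 1) * D a * k = a ^ (n - 1) * (k * (D a * of_nat n))"
    by (simp add: ac_simps)
  also have "\<dots> = - (of_nat i * (a ^ (n - 1) * a) * D k)"
    unfolding rel by (simp add: ac_simps)
  also have "a ^ (n - 1) * a = a ^ n"
    using ext_degree_pos by (simp add: power_Suc2[symmetric])
  finally have D_a: "of_nat n * a ^ (n - 1) * D a * k = - (of_nat i * a ^ n * D k)" .
  have D_k: "of_nat i * k ^ (i - 1) * k = of_nat i * k ^ i"
    by (cases i) simp_all
  have "D (a ^ n * k ^ i) * k = (of_nat n * a ^ (n - 1) * D a * k) * k ^ i
      + a ^ n * (of_nat i * k ^ (i - 1) * k) * D k"
    by (simp add: D.power algebra_simps)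
  also have "\<dots> = 0"
    unfolding D_a D_k by (simp add: algebra_simps)
  finally show ?thesis using radicand_nz by simp
qed

theorem algebraic_over_constants_in_base:
  assumes no_root: "\<And>a i. a \<noteq> 0 \<Longrightarrow> 0 < i \<Longrightarrow> i < n \<Longrightarrow> D (a ^ n * k ^ i) \<noteq> 0"
    and z: "z \<in> gen_field \<phi> l" and alg: "algebraic_over \<phi> {c. D c = 0} z"
  shows "z \<in> \<phi> ` {c. D c = 0}"
proof -
  obtain P where P: "degree P < n" "z = eval_l P" using gen_field_eval_l[OF z] by blast
  then have "ext_deriv P = 0" using ext_deriv_eq_0_if_algebraic alg by simp
  note D_coeff = D_coeff_if_ext_deriv_eq_0[OF this]
  have "coeff P i = 0" if "0 < i" for i
  proof (cases "i < n")
    case True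
    then show ?thesis using no_root[OF _ that True] D_power_radicand_eq_0[OF D_coeff[of i]] by blast
  next
    case False
    then show ?thesis using P by (simp add: coeff_eq_0)
  qed
  then have "P = [:coeff P 0:]"
    by (intro poly_eqI) (simp add: coeff_pCons split: nat.split)
  then have "z = \<phi> (coeff P 0)" using P(2) eval_l_const by metis
  moreover have "D (coeff P 0) = 0" using D_coeff[of 0] by simp
  ultimately show ?thesis by blast
qed

end

section \<open>The field \<open>\<complex>(x,y)\<close> and the derivation \<open>\<partial>/\<partial>y\<close>\<close>

instance fract :: ("{idom, ring_char_0}") field_char_0
proof
  show "inj (of_nat :: nat \<Rightarrow> 'a fract)"
    by (rule injI) (simp add: of_nat_fract eq_fract)
qed

instantiation fract :: (idom)
  "{unique_euclidean_ring, normalization_euclidean_semiring, normalization_semidom_multiplicative}"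
begin
definition [simp]: "normalize_fract = (normalize_field :: 'a fract \<Rightarrow> _)"
definition [simp]: "unit_factor_fract = (unit_factor_field :: 'a fract \<Rightarrow> _)"
definition [simp]: "modulo_fract = (mod_field :: 'a fract \<Rightarrow> _)"
definition [simp]: "euclidean_size_fract = (euclidean_size_field :: 'a fract \<Rightarrow> _)"
definition [simp]: "division_segment (x :: 'a fract) = 1"
instance
  by standard (simp_all add: dvd_field_iff field_split_simps split: if_splits)
end

instantiation fract :: (idom) euclidean_ring_gcd
begin
definition gcd_fract :: "'a fract \<Rightarrow> 'a fract \<Rightarrow> 'a fract" where
  "gcd_fract = Euclidean_Algorithm.gcd"
definition lcm_fract :: "'a fract \<Rightarrow> 'a fract \<Rightarrow> 'a fract" where
  "lcm_fract = Euclidean_Algorithm.lcm"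
definition Gcd_fract :: "'a fract set \<Rightarrow> 'a fract" where
  "Gcd_fract = Euclidean_Algorithm.Gcd"
definition Lcm_fract :: "'a fract set \<Rightarrow> 'a fract" where
  "Lcm_fract = Euclidean_Algorithm.Lcm"
instance
  by standard (simp_all add: gcd_fract_def lcm_fract_def Gcd_fract_def Lcm_fract_def)
end

instance fract :: (idom) field_gcd ..

lift_definition fract_pderiv :: "'a::idom poly fract \<Rightarrow> 'a poly fract"
  is "\<lambda>(a, b). (pderiv a * b - a * pderiv b, b * b)"
proof clarsimp
  fix a b a' b' :: "'a poly"
  assume eq: "a * b' = a' * b"
  have "pderiv a * b' + a * pderiv b' = pderiv a' * b + a' * pderiv b"
    using arg_cong[OF eq, of pderiv] by (simp add: pderiv_mult algebra_simps)
  with eq show "(pderiv a * b - a * pderiv b) * (b' * b') = (pderiv a' * b' - a' * pderiv b') * (b * b)"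
    by algebra
qed

lemma fract_pderiv_Fract:
  "b \<noteq> 0 \<Longrightarrow> fract_pderiv (Fract a b) = Fract (pderiv a * b - a * pderiv b) (b * b)"
  by transfer simp

interpretation fract_pderiv: derivation fract_pderiv
proof
  fix x y :: "'a::idom poly fract"
  obtain a b c d where "x = Fract a b" "b \<noteq> 0" "y = Fract c d" "d \<noteq> 0"
    by (metis Fract_cases)
  then show "fract_pderiv (x + y) = fract_pderiv x + fract_pderiv y"
    and "fract_pderiv (x * y) = fract_pderiv x * y + x * fract_pderiv y"
    by (simp_all add: fract_pderiv_Fract eq_fract pderiv_mult pderiv_add algebra_simps)
qed

lemma fract_pderiv_eq_0_iff:
  fixes u :: "'a::{factorial_ring_gcd, semiring_gcd_mult_normalize, ring_char_0} poly fract"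
  shows "fract_pderiv u = 0 \<longleftrightarrow> (\<exists>a b. b \<noteq> 0 \<and> u = Fract [:a:] [:b:])"
proof
  assume "fract_pderiv u = 0"
  define A B where "A = fst (quot_of_fract u)" and "B = snd (quot_of_fract u)"
  have u: "u = Fract A B" "B \<noteq> 0" "coprime A B"
    by (simp_all add: A_def B_def coprime_quot_of_fract)
  with \<open>fract_pderiv u = 0\<close> have eq: "A * pderiv B = pderiv A * B"
    by (simp add: fract_pderiv_Fract Zero_fract_def eq_fract)
  then have "A dvd pderiv A * B" by (metis dvd_triv_left)
  with \<open>coprime A B\<close> have "degree A = 0"
    by (simp add: coprime_dvd_mult_left_iff)
  then obtain a where A: "A = [:a:]" by (rule degree_eq_zeroE)
  show "\<exists>a b. b \<noteq> 0 \<and> u = Fract [:a:] [:b:]"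
  proof (cases "a = 0")
    case True
    then show ?thesis using u A by (intro exI[of _ 0] exI[of _ 1]) (simp add: eq_fract)
  next
    case False
    with eq A have "degree B = 0" by (simp add: pderiv_eq_0_iff)
    then obtain b where "B = [:b:]" by (rule degree_eq_zeroE)
    then show ?thesis using u A by auto
  qed
qed (auto simp: fract_pderiv_Fract Zero_fract_def eq_fract)

lemma Cx_field_eq_constants: "Cx_field = {u. fract_pderiv u = 0}"
  by (auto simp: Cx_field_def fract_pderiv_eq_0_iff to_K_def)

section \<open>Valuations on fraction fields\<close>

lemma multiplicity_cross_eq:
  fixes p :: "'a::{idom, factorial_semiring}"
  assumes "prime_elem p" "a \<noteq> 0" "b \<noteq> 0" "a' \<noteq> 0" "b' \<noteq> 0" "a * b' = a' * b"
  shows "int (multiplicity p a) - int (multiplicity p b) = int (multiplicity p a') - int (multiplicity p b')"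
proof -
  have "multiplicity p (a * b') = multiplicity p (a' * b)" using assms by simp
  then have "multiplicity p a + multiplicity p b' = multiplicity p a' + multiplicity p b"
    using assms(1-5) by (simp add: prime_elem_multiplicity_mult_distrib)
  then show ?thesis by linarith
qed

text \<open>The \<open>p\<close>-adic valuation of a fraction; it is \<open>0\<close> on \<open>0\<close> and for non-prime \<open>p\<close>.\<close>
lift_definition fract_multiplicity :: "'a::{idom, factorial_semiring} \<Rightarrow> 'a fract \<Rightarrow> int"
  is "\<lambda>p (a, b). if a = 0 \<or> \<not> prime_elem p then 0
    else int (multiplicity p a) - int (multiplicity p b)"
  apply clarsimp
  subgoal for p a b a' b'
    using multiplicity_cross_eq[of p a b a' b'] by (cases "a = 0") auto
  done

lemma fract_multiplicity_0 [simp]: "fract_multiplicity p 0 = 0"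
  by transfer simp

context
  fixes p :: "'a::{idom, factorial_semiring}"
  assumes p: "prime_elem p"
begin

lemma fract_multiplicity_Fract:
  "a \<noteq> 0 \<Longrightarrow> b \<noteq> 0 \<Longrightarrow> fract_multiplicity p (Fract a b) = int (multiplicity p a) - int (multiplicity p b)"
  using p by transfer simp

lemma fract_multiplicity_mult:
  assumes "x \<noteq> 0" "y \<noteq> 0"
  shows "fract_multiplicity p (x * y) = fract_multiplicity p x + fract_multiplicity p y"
proof -
  obtain a b where "x = Fract a b" "a \<noteq> 0" "b \<noteq> 0"
    using assms(1) by (cases x rule: Fract_cases_nonzero) auto
  moreover obtain c d where "y = Fract c d" "c \<noteq> 0" "d \<noteq> 0"
    using assms(2) by (cases y rule: Fract_cases_nonzero) auto
  ultimately show ?thesis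
    by (simp add: fract_multiplicity_Fract prime_elem_multiplicity_mult_distrib[OF p])
qed

lemma fract_multiplicity_inverse: "fract_multiplicity p (inverse x) = - fract_multiplicity p x"
  by (cases x rule: Fract_cases_nonzero) (simp_all add: fract_multiplicity_Fract)

lemma fract_multiplicity_power:
  "x \<noteq> 0 \<Longrightarrow> fract_multiplicity p (x ^ m) = int m * fract_multiplicity p x"
  by (induct m) (simp_all add: fract_multiplicity_mult algebra_simps One_fract_def
      fract_multiplicity_Fract)

lemma fract_multiplicity_power_int:
  "x \<noteq> 0 \<Longrightarrow> fract_multiplicity p (x powi e) = e * fract_multiplicity p x"
  by (cases "e \<ge> 0") (simp_all add: power_int_def fract_multiplicity_power
      fract_multiplicity_inverse)

lemma fract_multiplicity_prod:
  "(\<And>i. i \<in> A \<Longrightarrow> f i \<noteq> 0) \<Longrightarrow> fract_multiplicity p (prod f A) = (\<Sum>i\<in>A. fract_multiplicity p (f i))"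
  by (induct A rule: infinite_finite_induct)
    (simp_all add: fract_multiplicity_mult One_fract_def fract_multiplicity_Fract)

end

section \<open>The radicand\<close>

lemma to_K_eq_to_fract: "to_K x = to_fract x"
  by (simp add: to_K_def to_fract_def)

lemma fract_multiplicity_to_fract:
  "prime_elem p \<Longrightarrow> x \<noteq> 0 \<Longrightarrow> fract_multiplicity p (to_fract x) = int (multiplicity p x)"
  by (simp add: to_fract_def fract_multiplicity_Fract)

lemma to_K_power: "to_K (x ^ m) = to_K x ^ m"
  by (induct m) (simp_all add: to_K_eq_to_fract)

lemma not_dvd_const_if_notin_Cx_poly: "q \<notin> Cx_poly \<Longrightarrow> c \<noteq> 0 \<Longrightarrow> \<not> q dvd [:c:]"
  using dvd_imp_degree_le[of q "[:c:]"] by (force elim: degree_eq_zeroE simp: Cx_poly_def)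

lemma fract_multiplicity_Cx_field:
  assumes "irreducible q" "q \<notin> Cx_poly" "u \<in> Cx_field" "u \<noteq> 0"
  shows "fract_multiplicity q u = 0"
proof -
  obtain a b where "u = Fract [:a:] [:b:]" "b \<noteq> 0"
    using assms(3) by (auto simp: Cx_field_def to_K_def)
  moreover have "a \<noteq> 0"
    using assms(4) calculation by (auto simp: eq_fract(3) Zero_fract_def)
  moreover have "multiplicity q [:c:] = 0" if "c \<noteq> 0" for c
    using not_dvd_const_if_notin_Cx_poly[OF assms(2) that] by (rule not_dvd_imp_multiplicity_0)
  moreover have "prime_elem q" using assms(1) by (simp add: prime_elem_iff_irreducible)
  ultimately show ?thesis by (simp add: fract_multiplicity_Fract)
qed

lemma multiplicity_irreducible_coprime:
  fixes p q :: "'a::factorial_semiring_gcd"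
  assumes "irreducible p" "coprime p q"
  shows "multiplicity p q = 0"
proof (rule not_dvd_imp_multiplicity_0)
  show "\<not> p dvd q"
    using assms coprime_common_divisor[of p q p] by (auto simp: irreducible_def)
qed

lemma fract_multiplicity_factorization:
  fixes q :: "nat \<Rightarrow> Cxy"
  assumes q_irr: "\<And>i. i < r \<Longrightarrow> irreducible (q i)"
    and q_coprime: "\<And>i j. i < r \<Longrightarrow> j < r \<Longrightarrow> i \<noteq> j \<Longrightarrow> coprime (q i) (q j)"
    and "c \<noteq> 0" and j: "j < r" "q j \<notin> Cx_poly"
  shows "fract_multiplicity (q j) (to_K [:[:c:]:] * (\<Prod>i<r. to_K (q i) powi e i)) = e j"
proof -
  have p: "prime_elem (q j)" using q_irr[OF j(1)] by (simp add: prime_elem_iff_irreducible)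
  have q_nz: "q i \<noteq> 0" if "i < r" for i using q_irr[OF that] by auto
  have c_mem: "to_K [:[:c:]:] \<in> Cx_field"
    unfolding Cx_field_def
    by (rule CollectI, rule exI[of _ "[:c:]"], rule exI[of _ 1])
      (simp add: to_K_eq_to_fract one_pCons[symmetric])
  have "to_K [:[:c:]:] \<noteq> 0"
    using \<open>c \<noteq> 0\<close> by (simp add: to_K_eq_to_fract)
  then have const: "fract_multiplicity (q j) (to_K [:[:c:]:]) = 0"
    using fract_multiplicity_Cx_field[OF q_irr[OF j(1)] j(2) c_mem] by blast
  have "multiplicity (q j) (q i) = (if i = j then 1 else 0)" if "i < r" for i
  proof (cases "i = j")
    case True
    then show ?thesis
      using multiplicity_self[of "q j"] q_irr[OF j(1)] by (simp add: irreducible_def)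
  next
    case False
    then show ?thesis
      using multiplicity_irreducible_coprime[OF q_irr[OF j(1)] q_coprime[OF j(1) that]] by simp
  qed
  then have "(\<Sum>i<r. fract_multiplicity (q j) (to_K (q i) powi e i)) = (\<Sum>i<r. if i = j then e i else 0)"
    using q_nz by (intro sum.cong) (auto simp: fract_multiplicity_power_int[OF p]
        fract_multiplicity_to_fract[OF p] to_K_eq_to_fract)
  moreover have "fract_multiplicity (q j) (\<Prod>i<r. to_K (q i) powi e i)
      = (\<Sum>i<r. fract_multiplicity (q j) (to_K (q i) powi e i))"
    using q_nz by (intro fract_multiplicity_prod[OF p]) (simp add: to_K_eq_to_fract)
  ultimately have "fract_multiplicity (q j) (\<Prod>i<r. to_K (q i) powi e i) = (\<Sum>i<r. if i = j then e i else 0)"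
    by simp
  also have "\<dots> = e j" using j by simp
  finally show ?thesis
    using const q_nz \<open>to_K [:[:c:]:] \<noteq> 0\<close> by (simp add: fract_multiplicity_mult[OF p] to_K_eq_to_fract)
qed

lemma int_dvd_fract_multiplicity:
  assumes "irreducible q" "q \<notin> Cx_poly" "a \<noteq> 0" "k \<noteq> 0" "a ^ n * k ^ i \<in> Cx_field"
  shows "int n dvd int i * fract_multiplicity q k"
proof -
  have p: "prime_elem q" using assms(1) by (simp add: prime_elem_iff_irreducible)
  have "0 = fract_multiplicity q (a ^ n * k ^ i)"
    using fract_multiplicity_Cx_field assms by simp
  also have "\<dots> = int n * fract_multiplicity q a + int i * fract_multiplicity q k"
    using assms(3,4) by (simp add: fract_multiplicity_mult[OF p] fract_multiplicity_power[OF p])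
  finally have "int i * fract_multiplicity q k = int n * (- fract_multiplicity q a)"
    by simp
  then show ?thesis by simp
qed

lemma ex_divisor_dvd_exponents:
  fixes e :: "'j \<Rightarrow> int"
  assumes "0 < i" "i < n" and dvd: "\<And>j. j \<in> J \<Longrightarrow> int n dvd int i * e j"
  obtains p where "1 < p" "p dvd n" "\<And>j. j \<in> J \<Longrightarrow> int p dvd e j"
proof -
  define d p i' where "d = gcd n i" and "p = n div d" and "i' = i div d"
  have "0 < d" "d \<le> i" using assms by (simp_all add: d_def)
  have n: "n = p * d" and i: "i = i' * d" by (simp_all add: d_def p_def i'_def)
  have "coprime p i'"
    using assms by (simp add: d_def p_def i'_def div_gcd_coprime)
  have "1 < p"
  proof (rule ccontr)
    assume "\<not> 1 < p"
    then have "p = 0 \<or> p = 1" by auto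
    then show False using n \<open>d \<le> i\<close> \<open>i < n\<close> by auto
  qed
  moreover have "int p dvd e j" if "j \<in> J" for j
  proof -
    have "int p * int d dvd int i' * e j * int d"
      using dvd[OF that] unfolding n i by (simp add: ac_simps)
    then have "int p dvd int i' * e j" using \<open>0 < d\<close> by simp
    then show ?thesis using \<open>coprime p i'\<close> by (simp add: coprime_dvd_mult_right_iff)
  qed
  ultimately show ?thesis using that n by simp
qed

lemma ex_complex_nth_root: "0 < p \<Longrightarrow> \<exists>w::complex. w ^ p = c"
  by (intro exI[of _ "rcis (root p (cmod c)) (Arg c / p)"])
    (simp add: DeMoivre2 rcis_cmod_Arg real_root_pow_pos2)

lemma factorization_is_power:
  fixes q :: "nat \<Rightarrow> Cxy"
  assumes "0 < p" "\<And>j. j < r \<Longrightarrow> int p dvd e j"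
  shows "\<exists>g. to_K [:[:c:]:] * (\<Prod>i<r. to_K (q i) powi e i) = g ^ p"
proof -
  obtain w where "w ^ p = c" using ex_complex_nth_root[OF \<open>0 < p\<close>] by blast
  then have "to_K [:[:w:]:] ^ p = to_K [:[:c:]:]"
    by (simp add: to_K_power[symmetric] poly_const_pow)
  moreover have "(to_K (q i) powi (e i div int p)) ^ p = to_K (q i) powi e i" if "i < r" for i
    using assms(2)[OF that] by (metis dvd_div_mult_self power_int_mult power_int_of_nat)
  ultimately show ?thesis
    by (intro exI[of _ "to_K [:[:w:]:] * (\<Prod>i<r. to_K (q i) powi (e i div int p))"])
      (simp add: power_mult_distrib prod_power_distrib)
qed

theorem mainTheorem9:
  fixes \<phi> :: "K \<Rightarrow> 'L::field" and l :: 'L and n :: nat and k :: K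
    and r :: nat and q :: "nat \<Rightarrow> Cxy" and e :: "nat \<Rightarrow> int" and c :: complex
  assumes hom: "is_field_hom \<phi>"
    and k_nz: "k \<noteq> 0"
    and l_root: "l ^ n = \<phi> k"
    and deg: "ext_degree_eq \<phi> l n"
    and q_irr: "\<And>i. i < r \<Longrightarrow> irreducible (q i)"
    and q_coprime: "\<And>i j. i < r \<Longrightarrow> j < r \<Longrightarrow> i \<noteq> j \<Longrightarrow> coprime (q i) (q j)"
    and e_nz: "\<And>i. i < r \<Longrightarrow> e i \<noteq> 0"
    and c_nz: "c \<noteq> 0"
    and k_fact: "k = to_K [:[:c:]:] * (\<Prod>i<r. to_K (q i) powi e i)"
    and no_Cx: "\<And>i. i < r \<Longrightarrow> q i \<notin> Cx_poly"
  shows "\<forall>z \<in> gen_field \<phi> l. algebraic_over \<phi> Cx_field z \<longrightarrow> z \<in> \<phi> ` Cx_field"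
proof -
  interpret radical_extension_derivation \<phi> l n k fract_pderiv
    using hom k_nz l_root deg by unfold_locales
  have no_root: "fract_pderiv (a ^ n * k ^ i) \<noteq> 0" if "a \<noteq> 0" "0 < i" "i < n" for a i
  proof
    assume "fract_pderiv (a ^ n * k ^ i) = 0"
    then have mem: "a ^ n * k ^ i \<in> Cx_field" unfolding Cx_field_eq_constants by blast
    have "int n dvd int i * e j" if "j < r" for j
    proof -
      have "fract_multiplicity (q j) k = e j"
        unfolding k_fact
        by (rule fract_multiplicity_factorization[of r q, OF q_irr q_coprime c_nz that no_Cx[OF that]])
      then show ?thesis
        using int_dvd_fract_multiplicity[OF q_irr[OF that] no_Cx[OF that] \<open>a \<noteq> 0\<close> k_nz mem] by simp
    qed
    then have "\<And>j. j \<in> {..<r} \<Longrightarrow> int n dvd int i * e j" by simp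
    then obtain p where p: "1 < p" "p dvd n" "\<And>j. j \<in> {..<r} \<Longrightarrow> int p dvd e j"
      using ex_divisor_dvd_exponents[OF \<open>0 < i\<close> \<open>i < n\<close>] by metis
    then obtain g where "k = g ^ p"
      unfolding k_fact using factorization_is_power[of p r e] by fastforce
    then show False using radicand_not_power[OF p(1,2)] by blast
  qed
  show ?thesis
    unfolding Cx_field_eq_constants using algebraic_over_constants_in_base[OF no_root] by blast
qed

end
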